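(* For $n\ge1$ let $S_n$ be the set of binary sequences of length $n$ in which no maximal run of zeros has length congruent to $1 \bmod 3$. Classify each $\mathbf v\in S_n$ into one of five types: type A if $\mathbf v$ ends in a maximal run of $m>0$ zeros with $m\equiv 0\pmod 3$; type B if it ends in a maximal run of $m>0$ zeros with $m\equiv 2\pmod 3$; type C if $\mathbf v$ ends in $1$ and either $\mathbf v=1$ or the final $1$ is immediately preceded by a maximal run of $m>0$ zeros with $m\equiv0\pmod 3$; type D if the final $1$ is immediately preceded by a maximal run of $m>0$ zeros with $m\equiv 2\pmod 3$; type E if $\mathbf v$ ends in $11$. Define $f_n:S_n\to\mathcal P(S_{n+1})$ by: if $\mathbf v$ has type A, $f_n(\mathbf v)=\{\mathbf v1\}$; if type B, $f_n(\mathbf v)=\{\mathbf v0,\mathbf v1\}$; if type C or E, writing $\mathbf v=\mathbf u1$, $f_n(\mathbf v)=\{\mathbf v1,\mathbf u00\}$; if type D, $f_n(\mathbf v)=\{\mathbf v1\}$. Then the sets $f_n(\mathbf v)$, $\mathbf v\in S_n$, are pairwise disjoint and $$S_{n+1}=\bigcup_{\mathbf v\in S_n}f_n(\mathbf v),\qquad |S_{n+1}|=\sum_{\mathbf v\in S_n}|f_n(\mathbf v)|.$$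
   Context: A "run of zeros" means a maximal block of consecutive zeros; e.g. $00000\in S_5$. $\mathcal P(X)$ denotes the power set of $X$. *)

theory Defs
  imports Main
begin

definition zero_run :: "nat list \<Rightarrow> nat \<Rightarrow> nat \<Rightarrow> bool" where
  "zero_run v i j \<longleftrightarrow> i < j \<and> j \<le> length v \<and> (\<forall>k. i \<le> k \<and> k < j \<longrightarrow> v ! k = 0)
     \<and> (i = 0 \<or> v ! (i - 1) \<noteq> 0) \<and> (j = length v \<or> v ! j \<noteq> 0)"

definition S :: "nat \<Rightarrow> nat list set" where
  "S n = {v. length v = n \<and> set v \<subseteq> {0, 1} \<and>
            (\<forall>i j. zero_run v i j \<longrightarrow> (j - i) mod 3 \<noteq> 1)}"

definition typeA :: "nat list \<Rightarrow> bool" where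
  "typeA v \<longleftrightarrow> (\<exists>i. zero_run v i (length v) \<and> (length v - i) mod 3 = 0)"

definition typeB :: "nat list \<Rightarrow> bool" where
  "typeB v \<longleftrightarrow> (\<exists>i. zero_run v i (length v) \<and> (length v - i) mod 3 = 2)"

definition typeC :: "nat list \<Rightarrow> bool" where
  "typeC v \<longleftrightarrow> v \<noteq> [] \<and> last v = 1 \<and>
     (v = [1] \<or> (\<exists>i. zero_run v i (length v - 1) \<and> (length v - 1 - i) mod 3 = 0))"

definition typeD :: "nat list \<Rightarrow> bool" where
  "typeD v \<longleftrightarrow> v \<noteq> [] \<and> last v = 1 \<and>
     (\<exists>i. zero_run v i (length v - 1) \<and> (length v - 1 - i) mod 3 = 2)"

definition typeE :: "nat list \<Rightarrow> bool" where
  "typeE v \<longleftrightarrow> (\<exists>u. v = u @ [1, 1])"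

definition f :: "nat list \<Rightarrow> nat list set" where
  "f v = (if typeA v then {v @ [1]}
          else if typeB v then {v @ [0], v @ [1]}
          else if typeC v \<or> typeE v then {v @ [1], butlast v @ [0, 0]}
          else if typeD v then {v @ [1]}
          else {})"

end

theory Submission
  imports Defs
begin

text \<open>Write a binary word as \<open>u 0\<^sup>m\<close> with \<open>u\<close> empty or ending in \<open>1\<close>. Its maximal
  zero runs are those of \<open>u\<close> together with the final run of length \<open>m\<close>, and appending
  a \<open>1\<close> creates no new run; so admissibility of a word, its type and the set \<open>f v\<close> are
  determined by \<open>m mod 3\<close> and the corresponding data for \<open>u\<close>. Conversely every
  \<open>w \<in> S\<^sub>n\<^sub>+\<^sub>1\<close> lies in \<open>f v\<close> for some \<open>v \<in> S\<^sub>n\<close>, and \<open>v\<close> is determined by \<open>w\<close>: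
  delete the last letter of \<open>w\<close>, unless \<open>w\<close> ends in a run of length \<open>2 (mod 3)\<close>, in
  which case replace the final \<open>00\<close> by \<open>1\<close>.\<close>

lemma zero_run_nth: "zero_run v i j \<Longrightarrow> i \<le> k \<Longrightarrow> k < j \<Longrightarrow> v ! k = 0"
  by (simp add: zero_run_def)

lemma zero_run_snoc_nonzero:
  assumes "x \<noteq> 0"
  shows "zero_run (v @ [x]) i j \<longleftrightarrow> zero_run v i j"
proof
  assume run: "zero_run (v @ [x]) i j"
  have "j \<noteq> Suc (length v)"
  proof
    assume "j = Suc (length v)"
    moreover have "i < j" using run by (simp add: zero_run_def)
    ultimately have "(v @ [x]) ! length v = 0" using zero_run_nth[OF run, of "length v"] by simp
    with assms show False by simp
  qed
  with run show "zero_run v i j"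
    unfolding zero_run_def by (auto simp: nth_append split: if_splits)
qed (use assms in \<open>auto simp: zero_run_def nth_append\<close>)

lemma not_zero_run_at_end:
  assumes "u = [] \<or> last u \<noteq> 0"
  shows "\<not> zero_run u i (length u)"
proof
  assume run: "zero_run u i (length u)"
  then have "u \<noteq> []" "u ! (length u - 1) = 0" by (auto simp: zero_run_def intro: zero_run_nth)
  with assms show False by (simp add: last_conv_nth)
qed

lemma zero_run_append_zerosD:
  assumes u: "u = [] \<or> last u \<noteq> 0" and "0 < m"
    and run: "zero_run (u @ replicate m 0) i j" (is "zero_run ?w i j")
  shows "zero_run u i j \<or> (i = length u \<and> j = length u + m)"
proof -
  have ij: "i < j" "j \<le> length u + m" using run by (auto simp: zero_run_def)
  have maximal: "j = length u + m \<or> ?w ! j \<noteq> 0"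
    using run by (simp add: zero_run_def)
  show ?thesis
  proof (cases "j \<le> length u")
    case True
    with maximal \<open>0 < m\<close> have "j < length u"
      by (cases "j = length u") (auto simp: nth_append)
    with run have "zero_run u i j"
      unfolding zero_run_def by (auto simp: nth_append split: if_splits)
    then show ?thesis ..
  next
    case False
    have "i \<ge> length u"
    proof (rule ccontr)
      assume "\<not> i \<ge> length u"
      then have "u \<noteq> []" and "?w ! (length u - 1) = 0"
        using False zero_run_nth[OF run] by auto
      with u show False by (simp add: nth_append last_conv_nth)
    qed
    moreover have "i \<le> length u"
    proof (rule ccontr)
      assume "\<not> i \<le> length u"
      then have "?w ! (i - 1) = 0" using ij by (auto simp: nth_append)
      with run \<open>\<not> i \<le> length u\<close> show False by (simp add: zero_run_def)
    qed
    ultimately show ?thesis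
      using False ij maximal by (auto simp: nth_append)
  qed
qed

lemma zero_run_append_zeros:
  assumes u: "u = [] \<or> last u \<noteq> 0"
  shows "zero_run (u @ replicate m 0) i j \<longleftrightarrow>
    zero_run u i j \<or> (0 < m \<and> i = length u \<and> j = length u + m)"
proof (cases "m = 0")
  case False
  show ?thesis
  proof
    assume "zero_run (u @ replicate m 0) i j"
    with u False show "zero_run u i j \<or> (0 < m \<and> i = length u \<and> j = length u + m)"
      using zero_run_append_zerosD by blast
  next
    assume "zero_run u i j \<or> (0 < m \<and> i = length u \<and> j = length u + m)"
    then show "zero_run (u @ replicate m 0) i j"
    proof
      assume run: "zero_run u i j"
      then have "j < length u"
        using not_zero_run_at_end[OF u] by (fastforce simp: zero_run_def le_less)
      with run show ?thesis unfolding zero_run_def by (auto simp: nth_append)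
    next
      assume "0 < m \<and> i = length u \<and> j = length u + m"
      with u show ?thesis
        unfolding zero_run_def by (cases u rule: rev_cases) (auto simp: nth_append)
    qed
  qed
qed simp

lemma trailing_zero_run:
  assumes u: "u = [] \<or> last u \<noteq> 0"
  shows "zero_run (u @ replicate m 0) i (length u + m) \<longleftrightarrow> 0 < m \<and> i = length u"
proof -
  have "\<not> zero_run u i (length u + m)"
    using not_zero_run_at_end[OF u, of i] by (cases "m = 0") (auto simp: zero_run_def)
  then show ?thesis by (simp add: zero_run_append_zeros[OF u])
qed

lemma split_trailing_zeros:
  obtains u m where "v = u @ replicate m 0" "u = [] \<or> last u \<noteq> 0"
proof (induction v arbitrary: thesis rule: rev_induct)
  case (snoc x v)
  then obtain u m where v: "v = u @ replicate m 0" "u = [] \<or> last u \<noteq> 0" by blast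
  show ?case
  proof (cases "x = 0")
    case True
    with v have "v @ [x] = u @ replicate (Suc m) 0" by (simp add: replicate_append_same)
    with v snoc.prems show ?thesis by blast
  next
    case False
    with snoc.prems[of "v @ [x]" 0] show ?thesis by simp
  qed
qed simp

lemma binary_list_cases:
  fixes v :: "nat list"
  assumes "set v \<subseteq> {0, 1}"
  obtains "v = []"
    | u m where "v = u @ replicate m 0" "0 < m" "u = [] \<or> last u = 1"
    | u m where "v = u @ replicate m 0 @ [1]" "u = [] \<or> last u = 1"
proof -
  have last_binary: "u = [] \<or> last u = 1" if "u = [] \<or> last u \<noteq> 0" "set u \<subseteq> {0, 1}" for u :: "nat list"
  proof (cases "u = []")
    case False
    with that(2) have "last u \<in> {0, 1}" using last_in_set by blast
    with that(1) show ?thesis by auto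
  qed simp
  obtain u m where v: "v = u @ replicate m 0" and u: "u = [] \<or> last u \<noteq> 0"
    using split_trailing_zeros .
  show thesis
  proof (cases "m = 0 \<and> u \<noteq> []")
    case True
    with v have "v = u" by simp
    with True u assms last_binary[of u] have "last u = 1" by auto
    with True \<open>v = u\<close> have x: "v = butlast u @ [1]" by (metis append_butlast_last_id)
    obtain u' k where "butlast u = u' @ replicate k 0" and "u' = [] \<or> last u' \<noteq> 0"
      using split_trailing_zeros .
    with x assms last_binary[of u'] show thesis using that(3) by auto
  next
    case False
    with v u assms last_binary[of u] that(1,2) show thesis by auto
  qed
qed

definition admissible :: "nat list \<Rightarrow> bool" where
  "admissible v \<longleftrightarrow> (\<forall>i j. zero_run v i j \<longrightarrow> (j - i) mod 3 \<noteq> 1)"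

lemma mem_S_iff: "v \<in> S n \<longleftrightarrow> length v = n \<and> set v \<subseteq> {0, 1} \<and> admissible v"
  by (simp add: S_def admissible_def)

lemma admissible_snoc_nonzero: "x \<noteq> 0 \<Longrightarrow> admissible (v @ [x]) \<longleftrightarrow> admissible v"
  by (simp add: admissible_def zero_run_snoc_nonzero)

lemma admissible_append_zeros:
  assumes "u = [] \<or> last u \<noteq> 0"
  shows "admissible (u @ replicate m 0) \<longleftrightarrow> admissible u \<and> m mod 3 \<noteq> 1"
proof
  assume adm: "admissible (u @ replicate m 0)"
  then have "admissible u" by (simp add: admissible_def zero_run_append_zeros[OF assms])
  moreover have "m mod 3 \<noteq> 1"
  proof (cases "m = 0")
    case False
    then have "zero_run (u @ replicate m 0) (length u) (length u + m)"
      by (simp add: zero_run_append_zeros[OF assms])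
    with adm have "(length u + m - length u) mod 3 \<noteq> 1" unfolding admissible_def by blast
    then show ?thesis by simp
  qed simp
  ultimately show "admissible u \<and> m mod 3 \<noteq> 1" ..
qed (auto simp: admissible_def zero_run_append_zeros[OF assms])

lemma f_Nil: "f [] = {}"
  by (simp add: f_def typeA_def typeB_def typeC_def typeD_def typeE_def zero_run_def)

lemma f_append_zeros:
  assumes u: "u = [] \<or> last u \<noteq> 0" and "0 < m"
  shows "f (u @ replicate m 0) =
    (if m mod 3 = 0 then {u @ replicate m 0 @ [1]}
     else if m mod 3 = 2 then {u @ replicate (Suc m) 0, u @ replicate m 0 @ [1]}
     else {})"
proof -
  have "typeA (u @ replicate m 0) \<longleftrightarrow> m mod 3 = 0" "typeB (u @ replicate m 0) \<longleftrightarrow> m mod 3 = 2"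
    using trailing_zero_run[OF u] \<open>0 < m\<close> by (auto simp: typeA_def typeB_def)
  moreover have "last (u @ replicate m 0) = 0" using \<open>0 < m\<close> by simp
  then have "\<not> typeC (u @ replicate m 0)" "\<not> typeD (u @ replicate m 0)" "\<not> typeE (u @ replicate m 0)"
    by (auto simp: typeC_def typeD_def typeE_def)
  ultimately show ?thesis by (simp add: f_def replicate_append_same)
qed

lemma f_append_zeros_one:
  assumes u: "u = [] \<or> last u = 1"
  shows "f (u @ replicate m 0 @ [1]) =
    (if m mod 3 = 0 then {u @ replicate m 0 @ [1, 1], u @ replicate (m + 2) 0}
     else if m mod 3 = 2 then {u @ replicate m 0 @ [1, 1]}
     else {})"
proof -
  let ?v = "u @ replicate m 0 @ [1]"
  have u0: "u = [] \<or> last u \<noteq> 0" using u by auto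
  have run: "zero_run ?v i (length ?v - 1) \<longleftrightarrow> 0 < m \<and> i = length u" for i
    using zero_run_snoc_nonzero[of 1 "u @ replicate m 0"] trailing_zero_run[OF u0] by simp
  have "\<not> typeA ?v" "\<not> typeB ?v"
    using not_zero_run_at_end[of ?v] by (auto simp: typeA_def typeB_def)
  moreover have "typeC ?v \<longleftrightarrow> (u = [] \<and> m = 0) \<or> (0 < m \<and> m mod 3 = 0)"
    unfolding typeC_def run by (cases m) auto
  moreover have "typeD ?v \<longleftrightarrow> m mod 3 = 2"
    unfolding typeD_def run by auto
  moreover have "typeE ?v \<longleftrightarrow> m = 0 \<and> u \<noteq> [] \<and> last u = 1"
  proof -
    have "typeE ?v \<longleftrightarrow> (\<exists>x. u @ replicate m 0 = x @ [1])"
      unfolding typeE_def by (metis append.assoc append1_eq_conv append_Cons append_Nil)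
    also have "\<dots> \<longleftrightarrow> u @ replicate m 0 \<noteq> [] \<and> last (u @ replicate m 0) = 1"
      by (metis snoc_eq_iff_butlast)
    also have "\<dots> \<longleftrightarrow> m = 0 \<and> u \<noteq> [] \<and> last u = 1"
      by (cases m) auto
    finally show ?thesis .
  qed
  ultimately show ?thesis
    using u by (auto simp: f_def butlast_append replicate_app_Cons_same)
qed

lemma finite_f: "finite (f v)"
  by (simp add: f_def)

definition trailing_zeros :: "nat list \<Rightarrow> nat" where
  "trailing_zeros v = length (takeWhile (\<lambda>x. x = 0) (rev v))"

lemma trailing_zeros_append_zeros:
  assumes "u = [] \<or> last u \<noteq> 0"
  shows "trailing_zeros (u @ replicate m 0) = m"
  using assms takeWhile_append2[of "replicate m 0" "\<lambda>x. x = 0" "rev u"]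
  by (cases u rule: rev_cases) (auto simp: trailing_zeros_def)

definition parent :: "nat list \<Rightarrow> nat list" where
  "parent w = (if trailing_zeros w mod 3 = 2 then butlast (butlast w) @ [1] else butlast w)"

lemma parent_snoc_one: "parent (v @ [1]) = v"
  using trailing_zeros_append_zeros[of "v @ [1]" 0] by (simp add: parent_def)

lemma parent_append_Suc_zeros:
  assumes "u = [] \<or> last u \<noteq> 0" and "Suc m mod 3 \<noteq> 2"
  shows "parent (u @ replicate (Suc m) 0) = u @ replicate m 0"
  unfolding parent_def trailing_zeros_append_zeros[OF assms(1)]
  using assms(2) by (simp add: butlast_append flip: replicate_append_same)

lemma parent_append_two_zeros:
  assumes "u = [] \<or> last u \<noteq> 0" and "m mod 3 = 0"
  shows "parent (u @ replicate (m + 2) 0) = u @ replicate m 0 @ [1]"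
proof -
  from assms(2) have "(m + 2) mod 3 = 2" by presburger
  then show ?thesis
    unfolding parent_def trailing_zeros_append_zeros[OF assms(1)]
    by (simp add: butlast_append flip: replicate_append_same)
qed

lemma f_subset_S:
  assumes "v \<in> S n"
  shows "f v \<subseteq> S (Suc n)"
proof -
  from assms have v: "length v = n" "set v \<subseteq> {0, 1}" "admissible v"
    by (simp_all add: mem_S_iff)
  then have snoc: "v @ [1] \<in> S (Suc n)"
    by (simp add: mem_S_iff admissible_snoc_nonzero)
  from v(2) show ?thesis
  proof (cases rule: binary_list_cases)
    case 1
    then show ?thesis by (simp add: f_Nil)
  next
    case (2 u m)
    from 2 have u: "u = [] \<or> last u \<noteq> 0" by auto
    from v(3) have "admissible u" unfolding 2 admissible_append_zeros[OF u] by simp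
    then have "u @ replicate (Suc m) 0 \<in> S (Suc n)" if "m mod 3 = 2"
      using v that unfolding 2 mem_S_iff admissible_append_zeros[OF u] by (auto simp: mod_Suc)
    with snoc show ?thesis unfolding 2 f_append_zeros[OF u \<open>0 < m\<close>] by auto
  next
    case (3 u m)
    from 3 have u: "u = [] \<or> last u \<noteq> 0" by auto
    from v(3) have "admissible u"
      unfolding 3 append_assoc[symmetric] admissible_snoc_nonzero[OF one_neq_zero]
        admissible_append_zeros[OF u] by simp
    then have "u @ replicate (m + 2) 0 \<in> S (Suc n)" if "m mod 3 = 0"
      using v that unfolding 3 mem_S_iff admissible_append_zeros[OF u] by auto presburger
    with snoc show ?thesis unfolding 3 f_append_zeros_one[OF \<open>u = [] \<or> last u = 1\<close>] by auto
  qed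
qed

lemma parent_eq_of_mem_f:
  assumes "set v \<subseteq> {0, 1}" and "w \<in> f v"
  shows "parent w = v"
  using assms(1)
proof (cases rule: binary_list_cases)
  case 1
  with assms(2) show ?thesis by (simp add: f_Nil)
next
  case (2 u m)
  from 2 have u: "u = [] \<or> last u \<noteq> 0" by auto
  from assms(2) have "w = v @ [1] \<or> m mod 3 = 2 \<and> w = u @ replicate (Suc m) 0"
    unfolding 2 f_append_zeros[OF u \<open>0 < m\<close>] by (auto split: if_splits)
  then show ?thesis
    using parent_snoc_one[of v] parent_append_Suc_zeros[OF u, of m] 2 by (auto simp: mod_Suc)
next
  case (3 u m)
  from 3 have u: "u = [] \<or> last u \<noteq> 0" by auto
  from assms(2) have "w = v @ [1] \<or> m mod 3 = 0 \<and> w = u @ replicate (m + 2) 0"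
    unfolding 3 f_append_zeros_one[OF \<open>u = [] \<or> last u = 1\<close>] by (auto split: if_splits)
  then show ?thesis
    using parent_snoc_one[of v] parent_append_two_zeros[OF u, of m] 3 by auto
qed

lemma snoc_one_mem_f:
  assumes "set v \<subseteq> {0, 1}" and "admissible v" and "v \<noteq> []"
  shows "v @ [1] \<in> f v"
  using assms(1)
proof (cases rule: binary_list_cases)
  case (2 u m)
  from 2 have u: "u = [] \<or> last u \<noteq> 0" by auto
  from assms(2) have "m mod 3 \<noteq> 1" unfolding 2 admissible_append_zeros[OF u] by simp
  then show ?thesis unfolding 2 f_append_zeros[OF u \<open>0 < m\<close>] by auto
next
  case (3 u m)
  from 3 have u: "u = [] \<or> last u \<noteq> 0" by auto
  from assms(2) have "m mod 3 \<noteq> 1"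
    unfolding 3 append_assoc[symmetric] admissible_snoc_nonzero[OF one_neq_zero]
      admissible_append_zeros[OF u] by simp
  then show ?thesis unfolding 3 f_append_zeros_one[OF \<open>u = [] \<or> last u = 1\<close>] by auto
qed (use assms(3) in simp)

lemma mem_S_Suc_imp_ex_f:
  assumes "w \<in> S (Suc n)" and "1 \<le> n"
  shows "\<exists>v\<in>S n. w \<in> f v"
proof -
  from assms(1) have w: "length w = Suc n" "set w \<subseteq> {0, 1}" "admissible w"
    by (simp_all add: mem_S_iff)
  from w(2) show ?thesis
  proof (cases rule: binary_list_cases)
    case 1
    with w(1) show ?thesis by simp
  next
    case (2 u m)
    from 2 have u: "u = [] \<or> last u \<noteq> 0" by auto
    from w(3) have adm: "admissible u" "m mod 3 \<noteq> 1"
      unfolding 2 admissible_append_zeros[OF u] by simp_all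
    show ?thesis
    proof (cases "m mod 3 = 0")
      case True
      obtain k where k: "m = Suc k" using \<open>0 < m\<close> by (cases m) auto
      with True have "k mod 3 = 2" "0 < k" by presburger+
      let ?v = "u @ replicate k 0"
      have "?v \<in> S n"
        using w adm \<open>k mod 3 = 2\<close> unfolding 2 k mem_S_iff admissible_append_zeros[OF u] by auto
      moreover have "w \<in> f ?v"
        using \<open>k mod 3 = 2\<close> unfolding 2 k f_append_zeros[OF u \<open>0 < k\<close>] by simp
      ultimately show ?thesis ..
    next
      case False
      with adm have "2 \<le> m" by presburger
      then obtain k where k: "m = k + 2" by (metis le_add_diff_inverse2)
      with False adm have "k mod 3 = 0" by presburger
      let ?v = "u @ replicate k 0 @ [1]"
      have "?v \<in> S n"
        using w adm \<open>k mod 3 = 0\<close> unfolding 2 k mem_S_iff append_assoc[symmetric]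
          admissible_snoc_nonzero[OF one_neq_zero] admissible_append_zeros[OF u] by auto
      moreover have "w \<in> f ?v"
        using \<open>k mod 3 = 0\<close> unfolding 2 k f_append_zeros_one[OF \<open>u = [] \<or> last u = 1\<close>] by auto
      ultimately show ?thesis ..
    qed
  next
    case (3 u m)
    let ?v = "u @ replicate m 0"
    have "w = ?v @ [1]" using 3 by simp
    with w have v: "length ?v = n" "set ?v \<subseteq> {0, 1}" "admissible ?v"
      by (simp_all only: admissible_snoc_nonzero[OF one_neq_zero]) auto
    with assms(2) have "?v \<in> S n" "?v \<noteq> []" by (auto simp: mem_S_iff)
    moreover have "w \<in> f ?v"
      using snoc_one_mem_f[OF v(2,3) \<open>?v \<noteq> []\<close>] \<open>w = ?v @ [1]\<close> by simp
    ultimately show ?thesis by blast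
  qed
qed

lemma finite_S: "finite (S n)"
proof (rule finite_subset)
  show "S n \<subseteq> {xs. set xs \<subseteq> {0, 1} \<and> length xs = n}" by (auto simp: S_def)
  show "finite {xs. set xs \<subseteq> {0::nat, 1} \<and> length xs = n}"
    by (rule finite_lists_length_eq) simp
qed

theorem lemma1:
  fixes n :: nat
  assumes "n \<ge> 1"
  shows "(\<forall>v\<in>S n. \<forall>w\<in>S n. v \<noteq> w \<longrightarrow> f v \<inter> f w = {})
       \<and> S (Suc n) = (\<Union>v\<in>S n. f v)
       \<and> card (S (Suc n)) = (\<Sum>v\<in>S n. card (f v))"
proof (intro conjI)
  show disjoint: "\<forall>v\<in>S n. \<forall>w\<in>S n. v \<noteq> w \<longrightarrow> f v \<inter> f w = {}"
  proof (intro ballI impI)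
    fix v w
    assume "v \<in> S n" "w \<in> S n" "v \<noteq> w"
    then show "f v \<inter> f w = {}"
      using parent_eq_of_mem_f[of v] parent_eq_of_mem_f[of w] by (auto simp: mem_S_iff)
  qed
  show union: "S (Suc n) = (\<Union>v\<in>S n. f v)"
    using f_subset_S mem_S_Suc_imp_ex_f[OF _ assms] by blast
  show "card (S (Suc n)) = (\<Sum>v\<in>S n. card (f v))"
    unfolding union using finite_S finite_f disjoint by (intro card_UN_disjoint) auto
qed

end
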